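(* There exists a universal constant $A_3>0$ such that for every $n\ge1$ and any two convex bodies $A,B\subset\mathbb{R}^n$, \[ \mathrm{Vol}(A+B)^{1/n}\le A_3\,\mathrm{Vol}(A-B)^{1/n}. \]
   Context: A convex body is a bounded convex set with non-empty interior. $A+B=\{a+b:a\in A,b\in B\}$ and $A-B=\{a-b:a\in A,b\in B\}$ denote Minkowski sum and difference. *)

theory Defs
  imports "HOL-Analysis.Analysis"
begin

text \<open>R^n is modelled as the extensional functions on the index set {..<n}
  (the carrier of the product measure PiM).\<close>

definition Rn :: "nat \<Rightarrow> (nat \<Rightarrow> real) set" where
  "Rn n = PiE {..<n} (\<lambda>_. UNIV)"

definition lebesgue_n :: "nat \<Rightarrow> (nat \<Rightarrow> real) measure" where
  "lebesgue_n n = completion (PiM {..<n} (\<lambda>_. lborel))"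

definition vol_n :: "nat \<Rightarrow> (nat \<Rightarrow> real) set \<Rightarrow> real" where
  "vol_n n K = measure (lebesgue_n n) K"

definition mink_sum :: "nat \<Rightarrow> (nat \<Rightarrow> real) set \<Rightarrow> (nat \<Rightarrow> real) set \<Rightarrow> (nat \<Rightarrow> real) set" where
  "mink_sum n A B = {restrict (\<lambda>i. a i + b i) {..<n} | a b. a \<in> A \<and> b \<in> B}"

definition mink_diff :: "nat \<Rightarrow> (nat \<Rightarrow> real) set \<Rightarrow> (nat \<Rightarrow> real) set \<Rightarrow> (nat \<Rightarrow> real) set" where
  "mink_diff n A B = {restrict (\<lambda>i. a i - b i) {..<n} | a b. a \<in> A \<and> b \<in> B}"

definition convex_body_n :: "nat \<Rightarrow> (nat \<Rightarrow> real) set \<Rightarrow> bool" where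
  "convex_body_n n K \<longleftrightarrow>
     K \<subseteq> Rn n
   \<and> (\<forall>x\<in>K. \<forall>y\<in>K. \<forall>t::real. 0 \<le> t \<and> t \<le> 1 \<longrightarrow>
         restrict (\<lambda>i. (1 - t) * x i + t * y i) {..<n} \<in> K)
   \<and> (\<exists>R. \<forall>x\<in>K. \<forall>i<n. \<bar>x i\<bar> \<le> R)
   \<and> (\<exists>x\<in>K. \<exists>e>0. \<forall>y\<in>Rn n. (\<forall>i<n. \<bar>y i - x i\<bar> < e) \<longrightarrow> y \<in> K)"

end

(* For d = a + b in A + B, every u in b + int B satisfies u/2 \<in> B (the midpoint of b and u - b)
   and d - u = a - (u - b) \<in> int (A - B).  Counting the pairs (u, d) with u \<in> 2B, d \<in> A + B and
   d - u \<in> A - B in both orders (Tonelli) gives |A + B| |B| \<le> |2B| |A - B| = 2^n |B| |A - B|,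
   so C = 2 works.  Convex bodies are Lebesgue measurable with the volume of their interior:
   a homothety of ratio t < 1 centred at an interior point maps the closure into the interior,
   so the boundary has measure at most (1 - t^n) |closure K| for every t < 1. *)

theory Submission
  imports Defs
begin

abbreviation lborel_n :: "nat \<Rightarrow> (nat \<Rightarrow> real) measure" where
  "lborel_n n \<equiv> PiM {..<n} (\<lambda>_. lborel)"

interpretation lborel_n: product_sigma_finite "\<lambda>_::nat. lborel :: real measure"
  by standard

lemma space_lborel_n: "space (lborel_n n) = Rn n"
  by (simp add: space_PiM Rn_def)

lemma restrict_in_Rn [simp]: "restrict f {..<n} \<in> Rn n"
  by (simp add: Rn_def)

lemma restrict_eq_RnI:
  assumes "y \<in> Rn n" and "\<And>i. i < n \<Longrightarrow> f i = y i"
  shows "restrict f {..<n} = y"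
  using assms by (auto simp: Rn_def PiE_def extensional_def)

definition homothety :: "nat \<Rightarrow> real \<Rightarrow> (nat \<Rightarrow> real) \<Rightarrow> (nat \<Rightarrow> real) \<Rightarrow> (nat \<Rightarrow> real)" where
  "homothety n c z x = restrict (\<lambda>i. c * x i + z i) {..<n}"

definition diff_n :: "nat \<Rightarrow> (nat \<Rightarrow> real) \<Rightarrow> (nat \<Rightarrow> real) \<Rightarrow> (nat \<Rightarrow> real)" where
  "diff_n n x y = restrict (\<lambda>i. x i - y i) {..<n}"

lemma homothety_measurable [measurable]: "homothety n c z \<in> lborel_n n \<rightarrow>\<^sub>M lborel_n n"
  unfolding homothety_def by measurable

lemma diff_n_measurable [measurable]:
  "(\<lambda>p. diff_n n (snd p) (fst p)) \<in> lborel_n n \<Otimes>\<^sub>M lborel_n n \<rightarrow>\<^sub>M lborel_n n"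
  unfolding diff_n_def by measurable

lemma emeasure_lborel_affine_vimage:
  fixes c z :: real
  assumes c: "c > 0" and A: "A \<in> sets borel"
  shows "emeasure lborel ((\<lambda>x. c * x + z) -` A) = ennreal (1 / c) * emeasure lborel A"
proof -
  have "emeasure lborel A = emeasure (density (distr lborel borel (\<lambda>x. z + c * x)) (\<lambda>_. ennreal \<bar>c\<bar>)) A"
    using lborel_real_affine[of c z] c by simp
  also have "\<dots> = ennreal c * emeasure lborel ((\<lambda>x. c * x + z) -` A)"
    using A c by (simp add: emeasure_density emeasure_distr nn_integral_cmult_indicator add.commute)
  finally have "ennreal (1 / c) * emeasure lborel A
      = (ennreal (1 / c) * ennreal c) * emeasure lborel ((\<lambda>x. c * x + z) -` A)"
    by (simp add: mult.assoc)
  also have "ennreal (1 / c) * ennreal c = 1"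
    using c by (simp flip: ennreal_mult)
  finally show ?thesis by simp
qed

lemma distr_homothety_lborel_n:
  assumes c: "c > 0"
  shows "scale_measure (ennreal (c ^ n)) (distr (lborel_n n) (lborel_n n) (homothety n c z)) = lborel_n n"
proof (rule lborel_n.PiM_eqI)
  fix A :: "nat \<Rightarrow> real set"
  assume A: "\<And>i. i \<in> {..<n} \<Longrightarrow> A i \<in> sets lborel"
  have affine_sets: "(\<lambda>x. c * x + z i) -` A i \<in> sets borel" if "i < n" for i
    using measurable_sets[of "\<lambda>x. c * x + z i" borel borel "A i"] A that by simp
  have vimage: "homothety n c z -` PiE {..<n} A \<inter> space (lborel_n n)
      = PiE {..<n} (\<lambda>i. (\<lambda>x. c * x + z i) -` A i)"
    by (auto simp: homothety_def space_PiM PiE_iff)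
  have "emeasure (scale_measure (ennreal (c ^ n)) (distr (lborel_n n) (lborel_n n) (homothety n c z))) (PiE {..<n} A)
      = ennreal (c ^ n) * emeasure (lborel_n n) (PiE {..<n} (\<lambda>i. (\<lambda>x. c * x + z i) -` A i))"
    using A by (simp add: emeasure_distr vimage[symmetric] sets_PiM_I_finite)
  also have "\<dots> = ennreal (c ^ n) * (\<Prod>i<n. ennreal (1 / c) * emeasure lborel (A i))"
    using A c affine_sets by (subst lborel_n.emeasure_PiM) (auto simp: emeasure_lborel_affine_vimage)
  also have "\<dots> = (ennreal (c ^ n) * ennreal (1 / c) ^ n) * (\<Prod>i<n. emeasure lborel (A i))"
    by (simp add: prod.distrib mult.assoc)
  also have "ennreal (c ^ n) * ennreal (1 / c) ^ n = 1"
    using c by (simp add: power_mult_distrib[symmetric] flip: ennreal_power ennreal_mult)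
  finally show "emeasure (scale_measure (ennreal (c ^ n)) (distr (lborel_n n) (lborel_n n) (homothety n c z))) (PiE {..<n} A)
      = (\<Prod>i<n. emeasure lborel (A i))"
    by simp
qed simp_all

lemma emeasure_homothety_vimage:
  assumes c: "c > 0" and S: "S \<in> sets (lborel_n n)"
  shows "emeasure (lborel_n n) (homothety n c z -` S \<inter> Rn n) = ennreal ((1 / c) ^ n) * emeasure (lborel_n n) S"
proof -
  have "emeasure (lborel_n n) S = ennreal (c ^ n) * emeasure (lborel_n n) (homothety n c z -` S \<inter> Rn n)"
    using arg_cong[OF distr_homothety_lborel_n[OF c, of n z], of "\<lambda>M. emeasure M S"] S
    by (simp add: emeasure_distr space_lborel_n)
  then have "ennreal ((1 / c) ^ n) * emeasure (lborel_n n) S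
      = (ennreal ((1 / c) ^ n) * ennreal (c ^ n)) * emeasure (lborel_n n) (homothety n c z -` S \<inter> Rn n)"
    by (simp add: mult.assoc)
  also have "ennreal ((1 / c) ^ n) * ennreal (c ^ n) = 1"
    using c by (simp add: power_mult_distrib[symmetric] flip: ennreal_mult)
  finally show ?thesis by simp
qed

lemma vimage_diff_n_eq_homothety:
  "{x \<in> Rn n. diff_n n x u \<in> S} = homothety n 1 (\<lambda>i. - u i) -` S \<inter> Rn n"
  by (auto simp: diff_n_def homothety_def)

lemma sets_vimage_diff_n:
  "S \<in> sets (lborel_n n) \<Longrightarrow> {x \<in> Rn n. diff_n n x u \<in> S} \<in> sets (lborel_n n)"
  using measurable_sets[OF homothety_measurable, of S n 1 "\<lambda>i. - u i"]
  by (simp add: vimage_diff_n_eq_homothety space_lborel_n)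

lemma emeasure_vimage_diff_n:
  "S \<in> sets (lborel_n n) \<Longrightarrow> emeasure (lborel_n n) {x \<in> Rn n. diff_n n x u \<in> S} = emeasure (lborel_n n) S"
  unfolding vimage_diff_n_eq_homothety by (simp add: emeasure_homothety_vimage)

lemma emeasure_mult_le_double_counting:
  assumes [measurable]: "P \<in> sets (lborel_n n)" "D \<in> sets (lborel_n n)" "T \<in> sets (lborel_n n)" "E \<in> sets (lborel_n n)"
    and cover: "\<And>d. d \<in> P \<Longrightarrow> \<exists>b. \<forall>u\<in>Rn n. diff_n n u b \<in> T \<longrightarrow> u \<in> E \<and> diff_n n d u \<in> D"
  shows "emeasure (lborel_n n) P * emeasure (lborel_n n) T \<le> emeasure (lborel_n n) E * emeasure (lborel_n n) D"
proof -
  let ?M = "lborel_n n"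
  interpret finite_product_sigma_finite "\<lambda>_. lborel :: real measure" "{..<n}"
    by standard simp
  interpret pair_sigma_finite ?M ?M ..
  define f where "f u d = indicator E u * indicator P d * (indicator D (diff_n n d u) :: ennreal)" for u d
  have f_measurable: "case_prod f \<in> borel_measurable (?M \<Otimes>\<^sub>M ?M)"
    unfolding f_def case_prod_beta by measurable
  have lower: "indicator P d * emeasure ?M T \<le> (\<integral>\<^sup>+ u. f u d \<partial>?M)" for d
  proof (cases "d \<in> P")
    case True
    then obtain b where b: "\<And>u. u \<in> Rn n \<Longrightarrow> diff_n n u b \<in> T \<Longrightarrow> u \<in> E \<and> diff_n n d u \<in> D"
      using cover by blast
    have "emeasure ?M T = (\<integral>\<^sup>+ u. indicator {u \<in> Rn n. diff_n n u b \<in> T} u \<partial>?M)"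
      by (simp add: emeasure_vimage_diff_n sets_vimage_diff_n)
    also have "\<dots> \<le> (\<integral>\<^sup>+ u. f u d \<partial>?M)"
      using b True by (intro nn_integral_mono) (auto simp: f_def indicator_def)
    finally show ?thesis using True by simp
  qed simp
  have upper: "(\<integral>\<^sup>+ d. f u d \<partial>?M) \<le> indicator E u * emeasure ?M D" for u
  proof -
    have "(\<integral>\<^sup>+ d. f u d \<partial>?M) \<le> (\<integral>\<^sup>+ d. indicator E u * indicator {d \<in> Rn n. diff_n n d u \<in> D} d \<partial>?M)"
      by (intro nn_integral_mono) (auto simp: f_def indicator_def space_lborel_n)
    also have "\<dots> = indicator E u * emeasure ?M D"
      by (subst nn_integral_cmult_indicator) (simp_all add: emeasure_vimage_diff_n sets_vimage_diff_n)
    finally show ?thesis .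
  qed
  have "emeasure ?M P * emeasure ?M T = (\<integral>\<^sup>+ d. indicator P d * emeasure ?M T \<partial>?M)"
    by (simp add: nn_integral_multc)
  also have "\<dots> \<le> (\<integral>\<^sup>+ d. (\<integral>\<^sup>+ u. f u d \<partial>?M) \<partial>?M)"
    by (intro nn_integral_mono lower)
  also have "\<dots> = (\<integral>\<^sup>+ u. (\<integral>\<^sup>+ d. f u d \<partial>?M) \<partial>?M)"
    by (rule Fubini'[OF f_measurable])
  also have "\<dots> \<le> (\<integral>\<^sup>+ u. indicator E u * emeasure ?M D \<partial>?M)"
    by (intro nn_integral_mono upper)
  also have "\<dots> = emeasure ?M E * emeasure ?M D"
    by (simp add: nn_integral_multc)
  finally show ?thesis .
qed

definition cube :: "nat \<Rightarrow> (nat \<Rightarrow> real) \<Rightarrow> real \<Rightarrow> (nat \<Rightarrow> real) set" where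
  "cube n x e = {y \<in> Rn n. \<forall>i<n. \<bar>y i - x i\<bar> < e}"

definition interior_n :: "nat \<Rightarrow> (nat \<Rightarrow> real) set \<Rightarrow> (nat \<Rightarrow> real) set" where
  "interior_n n S = {x \<in> Rn n. \<exists>e>0. cube n x e \<subseteq> S}"

definition closure_n :: "nat \<Rightarrow> (nat \<Rightarrow> real) set \<Rightarrow> (nat \<Rightarrow> real) set" where
  "closure_n n S = {x \<in> Rn n. \<forall>e>0. cube n x e \<inter> S \<noteq> {}}"

lemma cube_eq_PiE: "cube n x e = PiE {..<n} (\<lambda>i. {x i - e <..< x i + e})"
  unfolding cube_def Rn_def PiE_def Pi_def extensional_def by (auto simp: abs_less_iff)

lemma sets_cube [measurable]: "cube n x e \<in> sets (lborel_n n)"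
  unfolding cube_eq_PiE by (rule sets_PiM_I_finite) auto

lemma emeasure_cube:
  assumes "e > 0"
  shows "emeasure (lborel_n n) (cube n x e) = ennreal ((2 * e) ^ n)"
proof -
  have "emeasure (lborel_n n) (cube n x e) = (\<Prod>i<n. emeasure lborel {x i - e <..< x i + e})"
    unfolding cube_eq_PiE by (subst lborel_n.emeasure_PiM) auto
  also have "\<dots> = ennreal ((2 * e) ^ n)"
    using assms by (simp add: emeasure_lborel_Ioo ennreal_power)
  finally show ?thesis .
qed

lemma center_in_cube: "x \<in> Rn n \<Longrightarrow> e > 0 \<Longrightarrow> x \<in> cube n x e"
  by (simp add: cube_def)

lemma cube_neighbourhood:
  assumes "y \<in> cube n x e"
  shows "\<exists>r>0. cube n y r \<subseteq> cube n x e"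
proof -
  define r where "r = Min (insert 1 ((\<lambda>i. e - \<bar>y i - x i\<bar>) ` {..<n}))"
  have "r > 0"
    using assms unfolding r_def cube_def by (subst Min_gr_iff) auto
  moreover have "r \<le> e - \<bar>y i - x i\<bar>" if "i < n" for i
    unfolding r_def using that by (intro Min_le) auto
  then have "cube n y r \<subseteq> cube n x e"
    by (fastforce simp: cube_def)
  ultimately show ?thesis by blast
qed

lemma interior_n_subset: "interior_n n S \<subseteq> S"
  by (auto simp: interior_n_def dest: center_in_cube)

lemma subset_closure_n: "S \<subseteq> Rn n \<Longrightarrow> S \<subseteq> closure_n n S"
  by (fastforce simp: closure_n_def dest: center_in_cube)

lemma interior_n_subset_closure_n: "S \<subseteq> Rn n \<Longrightarrow> interior_n n S \<subseteq> closure_n n S"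
  using interior_n_subset subset_closure_n by blast

lemma cube_subset_interior_n: "cube n x e \<subseteq> S \<Longrightarrow> cube n x e \<subseteq> interior_n n S"
  using cube_neighbourhood[of _ n x e] unfolding interior_n_def by (fastforce simp: cube_def)

lemma rational_point_near:
  fixes x :: "nat \<Rightarrow> real"
  assumes "r > 0"
  shows "\<exists>q \<in> PiE {..<n} (\<lambda>_. \<rat>). \<forall>i<n. \<bar>x i - q i\<bar> < r"
proof -
  have "\<forall>i. \<exists>q\<in>\<rat>. \<bar>x i - q\<bar> < r"
  proof
    fix i
    obtain q where "q \<in> \<rat>" "x i < q" "q < x i + r"
      using Rats_dense_in_real[of "x i" "x i + r"] assms by auto
    then show "\<exists>q\<in>\<rat>. \<bar>x i - q\<bar> < r"
      by (intro bexI[of _ q]) (simp_all add: abs_diff_less_iff)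
  qed
  then obtain q where "\<And>i. q i \<in> \<rat> \<and> \<bar>x i - q i\<bar> < r"
    by metis
  then show ?thesis
    by (intro bexI[of _ "restrict q {..<n}"]) auto
qed

lemma interior_n_eq_Union_rational_cubes:
  "interior_n n S = (\<Union>(q, r) \<in> {(q, r) \<in> PiE {..<n} (\<lambda>_. \<rat>) \<times> \<rat>. cube n q r \<subseteq> S}. cube n q r)"
proof (intro equalityI subsetI)
  fix x assume "x \<in> interior_n n S"
  then obtain e where x: "x \<in> Rn n" and e: "e > 0" "cube n x e \<subseteq> S"
    by (auto simp: interior_n_def)
  obtain r where r: "r \<in> \<rat>" "0 < r" "r < e / 2"
    using Rats_dense_in_real[of 0 "e / 2"] e by auto
  obtain q where q: "q \<in> PiE {..<n} (\<lambda>_. \<rat>)" "\<And>i. i < n \<Longrightarrow> \<bar>x i - q i\<bar> < r"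
    using rational_point_near[OF \<open>r > 0\<close>] by blast
  have "cube n q r \<subseteq> cube n x e"
  proof
    fix y assume y: "y \<in> cube n q r"
    have "\<bar>y i - x i\<bar> < e" if "i < n" for i
    proof -
      have "\<bar>y i - q i\<bar> < r"
        using y that by (simp add: cube_def)
      with q(2)[OF that] r(3) show ?thesis by (simp add: abs_diff_less_iff)
    qed
    then show "y \<in> cube n x e"
      using y by (simp add: cube_def)
  qed
  moreover have "x \<in> cube n q r"
    using x q(2) by (simp add: cube_def abs_minus_commute)
  ultimately show "x \<in> (\<Union>(q, r) \<in> {(q, r) \<in> PiE {..<n} (\<lambda>_. \<rat>) \<times> \<rat>. cube n q r \<subseteq> S}. cube n q r)"
    using q(1) r(1) e(2) by (intro UN_I[of "(q, r)"]) auto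
next
  fix x assume "x \<in> (\<Union>(q, r) \<in> {(q, r) \<in> PiE {..<n} (\<lambda>_. \<rat>) \<times> \<rat>. cube n q r \<subseteq> S}. cube n q r)"
  then obtain q r where "cube n q r \<subseteq> S" "x \<in> cube n q r"
    by auto
  then show "x \<in> interior_n n S"
    using cube_subset_interior_n by blast
qed

lemma sets_interior_n [measurable]: "interior_n n S \<in> sets (lborel_n n)"
proof -
  have "countable (PiE {..<n} (\<lambda>_. \<rat>) \<times> \<rat>)"
    by (intro countable_SIGMA countable_PiE countable_rat) auto
  then have "countable {(q, r) \<in> PiE {..<n} (\<lambda>_. \<rat>) \<times> \<rat>. cube n q r \<subseteq> S}"
    by (rule countable_subset[rotated]) blast
  then show ?thesis
    unfolding interior_n_eq_Union_rational_cubes by (intro sets.countable_UN'') auto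
qed

lemma closure_n_eq_complement_interior_n:
  "S \<subseteq> Rn n \<Longrightarrow> closure_n n S = Rn n - interior_n n (Rn n - S)"
  unfolding closure_n_def interior_n_def cube_def by blast

lemma sets_closure_n:
  assumes "S \<subseteq> Rn n"
  shows "closure_n n S \<in> sets (lborel_n n)"
  using sets.compl_sets[OF sets_interior_n, of n "Rn n - S"] assms
  by (simp add: closure_n_eq_complement_interior_n space_lborel_n)

lemma fmeasurable_closure_n:
  assumes S: "S \<subseteq> Rn n" and R: "\<forall>x\<in>S. \<forall>i<n. \<bar>x i\<bar> \<le> R"
  shows "closure_n n S \<in> fmeasurable (lborel_n n)"
proof (rule fmeasurableI2)
  show "closure_n n S \<subseteq> cube n (\<lambda>_. 0) (\<bar>R\<bar> + 1)"
  proof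
    fix x assume x: "x \<in> closure_n n S"
    then have "cube n x 1 \<inter> S \<noteq> {}"
      by (simp add: closure_n_def)
    then obtain k where k: "k \<in> S" "k \<in> cube n x 1"
      by blast
    have "\<bar>x i\<bar> < \<bar>R\<bar> + 1" if "i < n" for i
      using R k that unfolding cube_def by fastforce
    then show "x \<in> cube n (\<lambda>_. 0) (\<bar>R\<bar> + 1)"
      using x by (simp add: cube_def closure_n_def)
  qed
  have "emeasure (lborel_n n) (cube n (\<lambda>_. 0) (\<bar>R\<bar> + 1)) < \<infinity>"
    using emeasure_cube[of "\<bar>R\<bar> + 1" n "\<lambda>_. 0"] by simp
  then show "cube n (\<lambda>_. 0) (\<bar>R\<bar> + 1) \<in> fmeasurable (lborel_n n)"
    by (intro fmeasurableI) simp_all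
  show "closure_n n S \<in> sets (lborel_n n)"
    using S by (rule sets_closure_n)
qed

definition convex_n :: "nat \<Rightarrow> (nat \<Rightarrow> real) set \<Rightarrow> bool" where
  "convex_n n K \<longleftrightarrow>
     (\<forall>x\<in>K. \<forall>y\<in>K. \<forall>t::real. 0 \<le> t \<and> t \<le> 1 \<longrightarrow> restrict (\<lambda>i. (1 - t) * x i + t * y i) {..<n} \<in> K)"

lemma convex_body_n_iff:
  "convex_body_n n K \<longleftrightarrow>
     K \<subseteq> Rn n \<and> convex_n n K \<and> (\<exists>R. \<forall>x\<in>K. \<forall>i<n. \<bar>x i\<bar> \<le> R) \<and> (\<exists>x\<in>K. \<exists>e>0. cube n x e \<subseteq> K)"
  unfolding convex_body_n_def convex_n_def cube_def by blast

lemma shrink_coordinate_bound: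
  fixes t e x x0 y k :: real
  assumes t: "0 < t" "t < 1"
    and y: "\<bar>y - (t * x + (1 - t) * x0)\<bar> < (1 - t) * e / 2"
    and k: "\<bar>k - x\<bar> < (1 - t) * e / 2 / t"
  shows "\<bar>(y - t * k) / (1 - t) - x0\<bar> < e"
proof -
  have "\<bar>t * (k - x)\<bar> = t * \<bar>k - x\<bar>"
    using t by (simp add: abs_mult)
  also have "\<dots> < t * ((1 - t) * e / 2 / t)"
    using k t by (intro mult_strict_left_mono)
  also have "\<dots> = (1 - t) * e / 2"
    using t by simp
  finally have "\<bar>t * (k - x)\<bar> < (1 - t) * e / 2" .
  moreover have "(y - t * k) - (1 - t) * x0 = (y - (t * x + (1 - t) * x0)) - t * (k - x)"
    by (simp add: algebra_simps)
  ultimately have "\<bar>(y - t * k) - (1 - t) * x0\<bar> < (1 - t) * e"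
    using y by linarith
  then show ?thesis
    using t by (simp add: abs_divide divide_simps mult.commute)
qed

lemma homothety_closure_n_in_interior_n:
  assumes K: "convex_n n K" and e: "e > 0" "cube n x0 e \<subseteq> K"
    and t: "0 < t" "t < 1" and x: "x \<in> closure_n n K"
  shows "homothety n t (\<lambda>i. (1 - t) * x0 i) x \<in> interior_n n K"
proof -
  define p where "p = homothety n t (\<lambda>i. (1 - t) * x0 i) x"
  define r where "r = (1 - t) * e / 2"
  have r: "r > 0" "r / t > 0"
    using e t by (simp_all add: r_def)
  have "cube n p r \<subseteq> K"
  proof
    fix y assume y: "y \<in> cube n p r"
    obtain k where k: "k \<in> K" "k \<in> cube n x (r / t)"
      using x r unfolding closure_n_def by blast
    \<comment> \<open>y = (1 - t) w + t k, and w lies in the cube around x0 because k is close to x\<close>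
    define w where "w = restrict (\<lambda>i. (y i - t * k i) / (1 - t)) {..<n}"
    have "\<bar>w i - x0 i\<bar> < e" if "i < n" for i
      using shrink_coordinate_bound[OF t, of "y i" "x i" "x0 i" e "k i"] y k that
      by (simp add: w_def p_def r_def homothety_def cube_def)
    then have "w \<in> K"
      using e by (auto simp: cube_def w_def)
    then have "restrict (\<lambda>i. (1 - t) * w i + t * k i) {..<n} \<in> K"
      using K k t unfolding convex_n_def by simp
    moreover have "restrict (\<lambda>i. (1 - t) * w i + t * k i) {..<n} = y"
      using y t by (intro restrict_eq_RnI) (simp_all add: w_def cube_def)
    ultimately show "y \<in> K"
      by simp
  qed
  then show ?thesis
    using r by (auto simp: interior_n_def p_def homothety_def)
qed

lemma measure_closure_n_diff_interior_n_le:
  assumes K: "convex_body_n n K" and t: "0 < t" "t < 1"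
  shows "measure (lborel_n n) (closure_n n K - interior_n n K) \<le> (1 - t ^ n) * measure (lborel_n n) (closure_n n K)"
proof -
  let ?M = "lborel_n n" and ?C = "closure_n n K"
  obtain R x0 e where KR: "K \<subseteq> Rn n" and cv: "convex_n n K" and R: "\<forall>x\<in>K. \<forall>i<n. \<bar>x i\<bar> \<le> R"
    and e: "e > 0" "cube n x0 e \<subseteq> K"
    using K unfolding convex_body_n_iff by blast
  have C: "?C \<in> fmeasurable ?M"
    by (rule fmeasurable_closure_n[OF KR R])
  \<comment> \<open>T = x0 + t (closure K - x0)\<close>
  define T where "T = homothety n (1 / t) (\<lambda>i. x0 i - x0 i / t) -` ?C \<inter> Rn n"
  have T_interior: "T \<subseteq> interior_n n K"
  proof
    fix y assume y: "y \<in> T"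
    have "homothety n t (\<lambda>i. (1 - t) * x0 i) (homothety n (1 / t) (\<lambda>i. x0 i - x0 i / t) y) \<in> interior_n n K"
      using y by (intro homothety_closure_n_in_interior_n[OF cv e t]) (simp add: T_def)
    also have "homothety n t (\<lambda>i. (1 - t) * x0 i) (homothety n (1 / t) (\<lambda>i. x0 i - x0 i / t) y) = y"
      using y t unfolding homothety_def by (intro restrict_eq_RnI) (auto simp: T_def homothety_def field_simps)
    finally show "y \<in> interior_n n K" .
  qed
  then have T_subset: "T \<subseteq> ?C"
    using interior_n_subset_closure_n[OF KR] by blast
  have T: "T \<in> sets ?M"
    using measurable_sets[OF homothety_measurable, of ?C n "1 / t" "\<lambda>i. x0 i - x0 i / t"] C
    by (simp add: T_def space_lborel_n)
  have "emeasure ?M T = ennreal (t ^ n) * emeasure ?M ?C"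
    using emeasure_homothety_vimage[of "1 / t" ?C n] C t by (simp add: T_def)
  then have measure_T: "measure ?M T = t ^ n * measure ?M ?C"
    using t by (simp add: measure_def enn2real_mult)
  have "measure ?M (?C - interior_n n K) \<le> measure ?M (?C - T)"
    using C T T_interior by (intro measure_mono_fmeasurable) (auto intro: fmeasurable_Diff)
  also have "\<dots> = measure ?M ?C - measure ?M T"
    using C T T_subset by (intro measure_Diff) (auto simp: fmeasurable_def)
  finally show ?thesis
    by (simp add: measure_T algebra_simps)
qed

lemma null_sets_closure_n_diff_interior_n:
  assumes K: "convex_body_n n K"
  shows "closure_n n K - interior_n n K \<in> null_sets (lborel_n n)"
proof -
  let ?M = "lborel_n n" and ?N = "closure_n n K - interior_n n K"
  have "((\<lambda>t. (1 - t ^ n) * measure ?M (closure_n n K)) \<longlongrightarrow> (1 - 1 ^ n) * measure ?M (closure_n n K)) (at_left 1)"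
    by (intro tendsto_intros)
  moreover have "\<forall>\<^sub>F t in at_left 1. t \<in> {0<..<1::real}"
    by (rule eventually_at_left_real) simp
  then have "\<forall>\<^sub>F t in at_left 1. measure ?M ?N \<le> (1 - t ^ n) * measure ?M (closure_n n K)"
    by eventually_elim (auto intro: measure_closure_n_diff_interior_n_le[OF K])
  ultimately have "measure ?M ?N \<le> 0"
    by (auto intro: tendsto_lowerbound)
  then have "measure ?M ?N = 0"
    using measure_nonneg[of ?M ?N] by linarith
  moreover obtain R where "K \<subseteq> Rn n" "\<forall>x\<in>K. \<forall>i<n. \<bar>x i\<bar> \<le> R"
    using K unfolding convex_body_n_iff by blast
  then have "?N \<in> fmeasurable ?M"
    by (intro fmeasurable_Diff fmeasurable_closure_n sets_interior_n)
  ultimately show ?thesis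
    by (auto simp: fmeasurable_def emeasure_eq_ennreal_measure intro!: null_setsI)
qed

lemma vol_n_eq_measure_interior_n:
  assumes K: "convex_body_n n K"
  shows "vol_n n K = measure (lborel_n n) (interior_n n K)"
proof -
  have KR: "K \<subseteq> Rn n"
    using K by (simp add: convex_body_n_iff)
  note null = null_sets_closure_n_diff_interior_n[OF K]
  have K_sets: "K \<in> sets (lebesgue_n n)"
    unfolding lebesgue_n_def
    using null interior_n_subset subset_closure_n[OF KR]
    by (intro sets_completionI[of K "interior_n n K" "K - interior_n n K"]) auto
  have AE: "AE x in lebesgue_n n. x \<in> K \<longleftrightarrow> x \<in> interior_n n K"
    unfolding lebesgue_n_def
    using AE_completion[OF AE_not_in[OF null]] interior_n_subset subset_closure_n[OF KR]
    by (auto elim!: eventually_mono)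
  have "measure (lebesgue_n n) K = measure (lebesgue_n n) (interior_n n K)"
    by (rule measure_eq_AE[OF AE K_sets]) (simp add: lebesgue_n_def)
  then show ?thesis
    by (simp add: vol_n_def lebesgue_n_def)
qed

lemma emeasure_interior_n_convex_body_n:
  assumes K: "convex_body_n n K"
  shows "emeasure (lborel_n n) (interior_n n K) = ennreal (vol_n n K)"
proof -
  obtain R where KR: "K \<subseteq> Rn n" and R: "\<forall>x\<in>K. \<forall>i<n. \<bar>x i\<bar> \<le> R"
    using K unfolding convex_body_n_iff by blast
  have "interior_n n K \<in> fmeasurable (lborel_n n)"
    using fmeasurableI2[OF fmeasurable_closure_n[OF KR R] interior_n_subset_closure_n[OF KR] sets_interior_n] .
  then show ?thesis
    by (simp add: vol_n_eq_measure_interior_n[OF K] emeasure_eq_measure2)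
qed

lemma emeasure_closure_n_convex_body_n:
  assumes K: "convex_body_n n K"
  shows "emeasure (lborel_n n) (closure_n n K) = ennreal (vol_n n K)"
proof -
  have "closure_n n K - (closure_n n K - interior_n n K) = interior_n n K"
    using K interior_n_subset_closure_n by (auto simp: convex_body_n_iff)
  then show ?thesis
    using emeasure_Diff_null_set[OF null_sets_closure_n_diff_interior_n[OF K] sets_closure_n[of K n]] K
    by (simp add: convex_body_n_iff emeasure_interior_n_convex_body_n[OF K])
qed

lemma vol_n_pos:
  assumes K: "convex_body_n n K"
  shows "vol_n n K > 0"
proof -
  obtain x e where e: "e > 0" "cube n x e \<subseteq> K"
    using K unfolding convex_body_n_iff by blast
  have "0 < ennreal ((2 * e) ^ n)"
    using e by simp
  also have "\<dots> = emeasure (lborel_n n) (cube n x e)"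
    using emeasure_cube[OF e(1)] by simp
  also have "\<dots> \<le> emeasure (lborel_n n) (interior_n n K)"
    by (intro emeasure_mono cube_subset_interior_n e(2) sets_interior_n)
  also have "\<dots> = ennreal (vol_n n K)"
    by (rule emeasure_interior_n_convex_body_n[OF K])
  finally show ?thesis
    by simp
qed

lemma convex_n_add_scaled:
  assumes cvA: "convex_n n A" and cvB: "convex_n n B"
  shows "convex_n n {restrict (\<lambda>i. a i + c * b i) {..<n} | a b. a \<in> A \<and> b \<in> B}"
    (is "convex_n n ?S")
  unfolding convex_n_def
proof (intro ballI allI impI)
  fix x y and t :: real
  assume x: "x \<in> ?S" and y: "y \<in> ?S" and t: "0 \<le> t \<and> t \<le> 1"
  obtain a1 b1 where 1: "x = restrict (\<lambda>i. a1 i + c * b1 i) {..<n}" "a1 \<in> A" "b1 \<in> B"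
    using x by blast
  obtain a2 b2 where 2: "y = restrict (\<lambda>i. a2 i + c * b2 i) {..<n}" "a2 \<in> A" "b2 \<in> B"
    using y by blast
  define a where "a = restrict (\<lambda>i. (1 - t) * a1 i + t * a2 i) {..<n}"
  define b where "b = restrict (\<lambda>i. (1 - t) * b1 i + t * b2 i) {..<n}"
  have "a \<in> A" "b \<in> B"
    using cvA cvB 1 2 t unfolding convex_n_def a_def b_def by blast+
  moreover have "restrict (\<lambda>i. (1 - t) * x i + t * y i) {..<n} = restrict (\<lambda>i. a i + c * b i) {..<n}"
    by (auto simp: 1 2 a_def b_def algebra_simps)
  ultimately show "restrict (\<lambda>i. (1 - t) * x i + t * y i) {..<n} \<in> ?S"
    by blast
qed

lemma convex_body_n_add_scaled:
  assumes A: "convex_body_n n A" and B: "convex_body_n n B"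
  shows "convex_body_n n {restrict (\<lambda>i. a i + c * b i) {..<n} | a b. a \<in> A \<and> b \<in> B}"
    (is "convex_body_n n ?S")
proof -
  obtain Ra xa ea where cvA: "convex_n n A" and Ra: "\<forall>x\<in>A. \<forall>i<n. \<bar>x i\<bar> \<le> Ra"
    and xa: "xa \<in> A" "ea > 0" "cube n xa ea \<subseteq> A"
    using A unfolding convex_body_n_iff by blast
  obtain Rb xb where cvB: "convex_n n B" and Rb: "\<forall>x\<in>B. \<forall>i<n. \<bar>x i\<bar> \<le> Rb" and xb: "xb \<in> B"
    using B unfolding convex_body_n_iff by blast
  have "convex_n n ?S"
    by (rule convex_n_add_scaled[OF cvA cvB])
  moreover have "\<forall>x\<in>?S. \<forall>i<n. \<bar>x i\<bar> \<le> Ra + \<bar>c\<bar> * Rb"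
  proof (intro ballI allI impI)
    fix x i assume "x \<in> ?S" and i: "i < n"
    then obtain a b where ab: "x = restrict (\<lambda>i. a i + c * b i) {..<n}" "a \<in> A" "b \<in> B"
      by blast
    have "\<bar>a i + c * b i\<bar> \<le> \<bar>a i\<bar> + \<bar>c\<bar> * \<bar>b i\<bar>"
      by (simp add: abs_mult[symmetric] abs_triangle_ineq)
    also have "\<dots> \<le> Ra + \<bar>c\<bar> * Rb"
      using Ra Rb ab i by (intro add_mono mult_left_mono) auto
    finally show "\<bar>x i\<bar> \<le> Ra + \<bar>c\<bar> * Rb"
      using ab(1) i by simp
  qed
  moreover have "cube n (restrict (\<lambda>i. xa i + c * xb i) {..<n}) ea \<subseteq> ?S"
  proof
    fix y assume y: "y \<in> cube n (restrict (\<lambda>i. xa i + c * xb i) {..<n}) ea"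
    define a where "a = restrict (\<lambda>i. y i - c * xb i) {..<n}"
    have "a \<in> A"
      using y xa(3) by (auto simp: cube_def a_def algebra_simps)
    moreover have "y = restrict (\<lambda>i. a i + c * xb i) {..<n}"
      using y by (intro restrict_eq_RnI[symmetric]) (auto simp: a_def cube_def)
    ultimately show "y \<in> ?S"
      using xb by blast
  qed
  moreover have "restrict (\<lambda>i. xa i + c * xb i) {..<n} \<in> ?S"
    using xa(1) xb by blast
  moreover have "?S \<subseteq> Rn n"
    by auto
  ultimately show ?thesis
    unfolding convex_body_n_iff using xa(2) by blast
qed

lemma convex_body_n_mink_sum:
  "convex_body_n n A \<Longrightarrow> convex_body_n n B \<Longrightarrow> convex_body_n n (mink_sum n A B)"
  using convex_body_n_add_scaled[of n A B 1] by (simp add: mink_sum_def)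

lemma convex_body_n_mink_diff:
  "convex_body_n n A \<Longrightarrow> convex_body_n n B \<Longrightarrow> convex_body_n n (mink_diff n A B)"
  using convex_body_n_add_scaled[of n A B "-1"] by (simp add: mink_diff_def)

lemma half_mem_convex_n:
  assumes "convex_n n B" "b \<in> B" "diff_n n u b \<in> B"
  shows "homothety n (1 / 2) (\<lambda>_. 0) u \<in> B"
proof -
  have "restrict (\<lambda>i. (1 - 1 / 2) * b i + 1 / 2 * diff_n n u b i) {..<n} \<in> B"
    using assms(1)[unfolded convex_n_def, rule_format, OF assms(2,3), of "1 / 2"] by simp
  moreover have "restrict (\<lambda>i. (1 - 1 / 2) * b i + 1 / 2 * diff_n n u b i) {..<n} = homothety n (1 / 2) (\<lambda>_. 0) u"
    unfolding homothety_def diff_n_def by (intro restrict_ext) (simp add: field_simps)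
  ultimately show ?thesis
    by simp
qed

lemma diff_n_mem_interior_n_mink_diff:
  assumes a: "a \<in> A" and v: "v \<in> interior_n n B"
  shows "diff_n n a v \<in> interior_n n (mink_diff n A B)"
proof -
  obtain r where r: "r > 0" "cube n v r \<subseteq> B"
    using v by (auto simp: interior_n_def)
  have "cube n (diff_n n a v) r \<subseteq> mink_diff n A B"
  proof
    fix y assume y: "y \<in> cube n (diff_n n a v) r"
    define b where "b = restrict (\<lambda>i. a i - y i) {..<n}"
    have "b \<in> cube n v r"
      using y by (auto simp: cube_def b_def diff_n_def abs_diff_less_iff)
    then have "b \<in> B"
      using r(2) by blast
    moreover have "y = restrict (\<lambda>i. a i - b i) {..<n}"
      using y by (intro restrict_eq_RnI[symmetric]) (auto simp: b_def cube_def)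
    ultimately show "y \<in> mink_diff n A B"
      using a unfolding mink_diff_def by blast
  qed
  then show ?thesis
    using r(1) by (auto simp: interior_n_def diff_n_def)
qed

lemma mink_sum_translate_interior_n:
  assumes cvB: "convex_n n B" and d: "d \<in> mink_sum n A B"
  obtains b where "\<And>u. diff_n n u b \<in> interior_n n B \<Longrightarrow>
    homothety n (1 / 2) (\<lambda>_. 0) u \<in> B \<and> diff_n n d u \<in> interior_n n (mink_diff n A B)"
proof -
  obtain a b where ab: "a \<in> A" "b \<in> B" "d = restrict (\<lambda>i. a i + b i) {..<n}"
    using d unfolding mink_sum_def by blast
  have "homothety n (1 / 2) (\<lambda>_. 0) u \<in> B \<and> diff_n n d u \<in> interior_n n (mink_diff n A B)"
    if u: "diff_n n u b \<in> interior_n n B" for u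
  proof
    show "homothety n (1 / 2) (\<lambda>_. 0) u \<in> B"
      using u interior_n_subset by (intro half_mem_convex_n[OF cvB ab(2)]) blast
    have "diff_n n d u = diff_n n a (diff_n n u b)"
      by (auto simp: ab(3) diff_n_def)
    then show "diff_n n d u \<in> interior_n n (mink_diff n A B)"
      using diff_n_mem_interior_n_mink_diff[OF ab(1) u] by simp
  qed
  then show ?thesis
    using that by blast
qed

lemma vol_n_mink_sum_le:
  assumes A: "convex_body_n n A" and B: "convex_body_n n B"
  shows "vol_n n (mink_sum n A B) \<le> 2 ^ n * vol_n n (mink_diff n A B)"
proof -
  let ?M = "lborel_n n"
  have vol_nonneg: "0 \<le> vol_n n K" for K
    by (simp add: vol_n_def)
  \<comment> \<open>E = 2 (closure B)\<close>
  define E where "E = homothety n (1 / 2) (\<lambda>_. 0) -` closure_n n B \<inter> Rn n"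
  have BR: "B \<subseteq> Rn n" and cvB: "convex_n n B"
    using B by (simp_all add: convex_body_n_iff)
  have E: "E \<in> sets ?M"
    using measurable_sets[OF homothety_measurable sets_closure_n[OF BR]]
    by (simp add: E_def space_lborel_n)
  have "emeasure ?M (interior_n n (mink_sum n A B)) * emeasure ?M (interior_n n B)
      \<le> emeasure ?M E * emeasure ?M (interior_n n (mink_diff n A B))"
  proof (rule emeasure_mult_le_double_counting)
    fix d assume "d \<in> interior_n n (mink_sum n A B)"
    then obtain b where b: "\<And>u. diff_n n u b \<in> interior_n n B \<Longrightarrow>
        homothety n (1 / 2) (\<lambda>_. 0) u \<in> B \<and> diff_n n d u \<in> interior_n n (mink_diff n A B)"
      using mink_sum_translate_interior_n[OF cvB] interior_n_subset by blast
    show "\<exists>b. \<forall>u\<in>Rn n. diff_n n u b \<in> interior_n n B \<longrightarrow> u \<in> E \<and> diff_n n d u \<in> interior_n n (mink_diff n A B)"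
      using b subset_closure_n[OF BR] by (auto simp: E_def)
  qed (simp_all add: E)
  moreover have "emeasure ?M E = ennreal (2 ^ n) * ennreal (vol_n n B)"
    using emeasure_homothety_vimage[of "1 / 2" "closure_n n B" n] sets_closure_n[OF BR]
    by (simp add: E_def emeasure_closure_n_convex_body_n[OF B])
  ultimately have "ennreal (vol_n n (mink_sum n A B) * vol_n n B) \<le> ennreal (2 ^ n * vol_n n (mink_diff n A B) * vol_n n B)"
    by (simp add: emeasure_interior_n_convex_body_n A B convex_body_n_mink_sum convex_body_n_mink_diff
        vol_nonneg ennreal_mult'[symmetric] mult_ac)
  then have "vol_n n (mink_sum n A B) * vol_n n B \<le> 2 ^ n * vol_n n (mink_diff n A B) * vol_n n B"
    using vol_n_pos[OF B] by (subst (asm) ennreal_le_iff) (auto simp: vol_n_def)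
  then show ?thesis
    using vol_n_pos[OF B] by simp
qed

lemma powr_inverse_le_of_le_power:
  fixes x y c :: real
  assumes "n \<ge> 1" "0 \<le> x" "0 \<le> y" "0 < c" "x \<le> c ^ n * y"
  shows "x powr (1 / real n) \<le> c * y powr (1 / real n)"
proof -
  have "x powr (1 / real n) \<le> (c ^ n * y) powr (1 / real n)"
    using assms by (intro powr_mono2) auto
  also have "\<dots> = (c ^ n) powr (1 / real n) * y powr (1 / real n)"
    using assms by (simp add: powr_mult)
  also have "(c ^ n) powr (1 / real n) = c"
    using assms by (simp add: powr_realpow[symmetric] powr_powr del: powr_realpow)
  finally show ?thesis .
qed

theorem mainTheorem4:
  shows "\<exists>C::real. C > 0 \<and>
    (\<forall>n::nat. \<forall>A B. n \<ge> 1 \<longrightarrow> convex_body_n n A \<longrightarrow> convex_body_n n B \<longrightarrow>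
       vol_n n (mink_sum n A B) powr (1 / real n) \<le> C * vol_n n (mink_diff n A B) powr (1 / real n))"
proof (intro exI[of _ 2] conjI allI impI)
  fix n :: nat and A B
  assume "n \<ge> 1" "convex_body_n n A" "convex_body_n n B"
  then show "vol_n n (mink_sum n A B) powr (1 / real n) \<le> 2 * vol_n n (mink_diff n A B) powr (1 / real n)"
    by (intro powr_inverse_le_of_le_power vol_n_mink_sum_le) (simp_all add: vol_n_def)
qed simp

end
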